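(* Let $n\geqslant 1$ and $m\geqslant 0$ be integers, and let $$P(x_1,\ldots,x_n)=\sum_{\substack{j_1,\ldots,j_n\geqslant 0\\ j_1+\cdots+j_n=m}} c_{j_1,\ldots,j_n}x_1^{j_1}\cdots x_n^{j_n}\in\mathbb{C}[x_1,\ldots,x_n]$$ and $$P^*(x_1,\ldots,x_n)=\sum_{\substack{j_1,\ldots,j_n\geqslant 0\\ j_1+\cdots+j_n=m}} c_{j_1,\ldots,j_n}(x_1)_{j_1}\cdots(x_n)_{j_n}.$$ Suppose $P\neq 0$ and $\deg P\leqslant k_1+\cdots+k_n$ where $k_1,\ldots,k_n$ are nonnegative integers. Then the coefficient of $x_1^{k_1}\cdots x_n^{k_n}$ in $$P(x_1,\ldots,x_n)(x_1+\cdots+x_n)^{k_1+\cdots+k_n-\deg P}$$ equals $$\frac{\left(\sum_{i=1}^n k_i-\deg P\right)!}{k_1!\cdots k_n!}\,P^*(k_1,\ldots,k_n).$$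
   Context: $(x)_0=1$ and $(x)_r=x(x-1)\cdots(x-r+1)$ for positive integers $r$ (falling factorial). *)

theory Defs
  imports Complex_Main "HOL-Library.Poly_Mapping"
begin

text \<open>Multivariate polynomials over C in variables x_0,...,x_{n-1}:
  finitely supported maps from exponent vectors (nat =>0 nat) to complex,
  with the convolution product of Poly_Mapping.\<close>

type_synonym cpoly = "(nat \<Rightarrow>\<^sub>0 nat) \<Rightarrow>\<^sub>0 complex"

definition var :: "nat \<Rightarrow> cpoly" where
  "var i = Poly_Mapping.single (Poly_Mapping.single i 1) 1"

definition mon_deg :: "(nat \<Rightarrow>\<^sub>0 nat) \<Rightarrow> nat" where
  "mon_deg \<alpha> = (\<Sum>i\<in>Poly_Mapping.keys \<alpha>. Poly_Mapping.lookup \<alpha> i)"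

definition total_deg :: "cpoly \<Rightarrow> nat" where
  "total_deg P = Max (mon_deg ` Poly_Mapping.keys P)"

definition falling :: "complex \<Rightarrow> nat \<Rightarrow> complex" where
  "falling x r = (\<Prod>i<r. x - of_nat i)"

definition pstar_eval :: "nat \<Rightarrow> cpoly \<Rightarrow> (nat \<Rightarrow> complex) \<Rightarrow> complex" where
  "pstar_eval n P y = (\<Sum>\<alpha>\<in>Poly_Mapping.keys P. Poly_Mapping.lookup P \<alpha> * (\<Prod>i<n. falling (y i) (Poly_Mapping.lookup \<alpha> i)))"

end

theory Submission
  imports Defs
begin

text \<open>With \<open>S = x\<^sub>1 + \<dots> + x\<^sub>n\<close> and \<open>d = |k| - m\<close>, the multinomial theorem gives the coefficient
  \<open>d! / \<beta>!\<close> of \<open>x\<^sup>\<beta>\<close> in \<open>S\<^sup>d\<close> whenever \<open>|\<beta>| = d\<close>. Since \<open>P\<close> is homogeneous of degree \<open>m\<close>, every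
  monomial \<open>x\<^sup>\<alpha>\<close> of \<open>P\<close> with \<open>\<alpha> \<le> k\<close> contributes \<open>c\<^sub>\<alpha> d! / (k - \<alpha>)!\<close> to the coefficient of \<open>x\<^sup>k\<close>
  in \<open>P S\<^sup>d\<close>, and \<open>k! / (k - \<alpha>)! = \<Prod>\<^sub>i (k\<^sub>i)\<^sub>\<alpha>\<^sub>i\<close>. The monomials with \<open>\<alpha> \<not>\<le> k\<close> contribute
  nothing to either side, because some falling factorial \<open>(k\<^sub>i)\<^sub>\<alpha>\<^sub>i\<close> with \<open>k\<^sub>i < \<alpha>\<^sub>i\<close> vanishes.\<close>

lemma add_eq_iff_le_and_diff:
  fixes k l q :: "'a \<Rightarrow>\<^sub>0 nat"
  shows "k = l + q \<longleftrightarrow> Poly_Mapping.lookup l \<le> Poly_Mapping.lookup k \<and> q = k - l"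
  by (auto simp: le_fun_def lookup_add lookup_minus intro!: poly_mapping_eqI)

lemma lookup_mult_eq_sum_keys:
  fixes f g :: "('a \<Rightarrow>\<^sub>0 nat) \<Rightarrow>\<^sub>0 'b::semiring_0"
  shows "Poly_Mapping.lookup (f * g) k =
    (\<Sum>l\<in>{l \<in> Poly_Mapping.keys f. Poly_Mapping.lookup l \<le> Poly_Mapping.lookup k}.
      Poly_Mapping.lookup f l * Poly_Mapping.lookup g (k - l))"
proof -
  have "(\<Sum>q. Poly_Mapping.lookup g q when k = l + q) =
      (Poly_Mapping.lookup g (k - l) when Poly_Mapping.lookup l \<le> Poly_Mapping.lookup k)" for l
    by (simp add: add_eq_iff_le_and_diff when_def conj_commute)
  then have "Poly_Mapping.lookup (f * g) k =
      (\<Sum>l. Poly_Mapping.lookup f l * Poly_Mapping.lookup g (k - l)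
        when Poly_Mapping.lookup l \<le> Poly_Mapping.lookup k)"
    by (simp add: lookup_mult mult_when)
  also have "\<dots> = (\<Sum>l\<in>Poly_Mapping.keys f. Poly_Mapping.lookup f l * Poly_Mapping.lookup g (k - l)
      when Poly_Mapping.lookup l \<le> Poly_Mapping.lookup k)"
    by (rule Sum_any.expand_superset) (auto simp: in_keys_iff)
  also have "\<dots> = (\<Sum>l\<in>{l \<in> Poly_Mapping.keys f. Poly_Mapping.lookup l \<le> Poly_Mapping.lookup k}.
      Poly_Mapping.lookup f l * Poly_Mapping.lookup g (k - l))"
    by (simp add: when_def sum.inter_filter)
  finally show ?thesis .
qed

lemma lookup_var_mult:
  "Poly_Mapping.lookup (var i * Q) b =
    (if Poly_Mapping.lookup b i = 0 then 0 else Poly_Mapping.lookup Q (b - Poly_Mapping.single i 1))"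
proof -
  have "{l \<in> Poly_Mapping.keys (var i). Poly_Mapping.lookup l \<le> Poly_Mapping.lookup b} =
      (if Poly_Mapping.lookup b i = 0 then {} else {Poly_Mapping.single i 1})"
    by (auto simp: var_def le_fun_def lookup_single when_def)
  then show ?thesis
    by (simp add: lookup_mult_eq_sum_keys var_def)
qed

lemma keys_add_single:
  fixes c :: "'a \<Rightarrow>\<^sub>0 nat"
  assumes "r \<noteq> 0"
  shows "Poly_Mapping.keys (c + Poly_Mapping.single i r) = insert i (Poly_Mapping.keys c)"
  using assms
  by (auto simp: in_keys_iff lookup_add lookup_single when_def split: if_splits)

lemma sum_lookup_add_single:
  fixes c :: "'a \<Rightarrow>\<^sub>0 nat"
  assumes "finite I" "i \<in> I"
  shows "(\<Sum>j\<in>I. Poly_Mapping.lookup (c + Poly_Mapping.single i r) j) =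
    (\<Sum>j\<in>I. Poly_Mapping.lookup c j) + r"
  using assms by (simp add: lookup_add lookup_single sum.distrib when_def)

lemma prod_fact_lookup_add_single:
  fixes c :: "'a \<Rightarrow>\<^sub>0 nat"
  assumes "finite I" "i \<in> I"
  shows "(\<Prod>j\<in>I. fact (Poly_Mapping.lookup (c + Poly_Mapping.single i 1) j)) =
    Suc (Poly_Mapping.lookup c i) * (\<Prod>j\<in>I. fact (Poly_Mapping.lookup c j) :: nat)"
proof -
  have rest: "(\<Prod>j\<in>I - {i}. fact (Poly_Mapping.lookup (c + Poly_Mapping.single i 1) j)) =
      (\<Prod>j\<in>I - {i}. fact (Poly_Mapping.lookup c j) :: nat)"
    by (intro prod.cong) (auto simp: lookup_add lookup_single)
  show ?thesis
    unfolding prod.remove[OF assms] rest by (simp add: lookup_add algebra_simps)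
qed

theorem lookup_sum_var_power:
  assumes "finite I"
  shows "Poly_Mapping.lookup ((\<Sum>i\<in>I. var i) ^ d) b =
    (if Poly_Mapping.keys b \<subseteq> I \<and> (\<Sum>i\<in>I. Poly_Mapping.lookup b i) = d
     then of_nat (fact d) / of_nat (\<Prod>i\<in>I. fact (Poly_Mapping.lookup b i)) else 0)"
proof (induction d arbitrary: b)
  case 0
  have "Poly_Mapping.keys b \<subseteq> I \<and> (\<Sum>i\<in>I. Poly_Mapping.lookup b i) = 0 \<longleftrightarrow> b = 0"
    using assms by (auto simp: in_keys_iff subset_iff intro!: poly_mapping_eqI)
  then show ?case
    by (auto simp: lookup_one when_def)
next
  case (Suc d)
  let ?S = "\<Sum>i\<in>I. var i"
  define supported :: "(nat \<Rightarrow>\<^sub>0 nat) \<Rightarrow> nat \<Rightarrow> bool" where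
    "supported c e \<longleftrightarrow> Poly_Mapping.keys c \<subseteq> I \<and> (\<Sum>i\<in>I. Poly_Mapping.lookup c i) = e" for c e
  define F where "F = (\<Prod>i\<in>I. fact (Poly_Mapping.lookup b i) :: nat)"
  have summand: "Poly_Mapping.lookup (var i * ?S ^ d) b =
      (if supported b (Suc d) then of_nat (fact d) * of_nat (Poly_Mapping.lookup b i) / of_nat F else 0)"
    if "i \<in> I" for i
  proof (cases "Poly_Mapping.lookup b i = 0")
    case False
    define c where "c = b - Poly_Mapping.single i 1"
    have b: "b = c + Poly_Mapping.single i 1"
      using False by (auto simp: c_def lookup_add lookup_minus lookup_single when_def intro!: poly_mapping_eqI)
    have "supported c d \<longleftrightarrow> supported b (Suc d)"
      unfolding supported_def b using assms that
      by (simp add: keys_add_single sum_lookup_add_single)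
    moreover have "F = Poly_Mapping.lookup b i * (\<Prod>j\<in>I. fact (Poly_Mapping.lookup c j))"
      unfolding F_def b by (simp only: prod_fact_lookup_add_single[OF assms that]) (simp add: lookup_add)
    moreover have "Poly_Mapping.lookup (var i * ?S ^ d) b = Poly_Mapping.lookup (?S ^ d) c"
      using False by (simp add: lookup_var_mult c_def)
    ultimately show ?thesis
      using Suc.IH[of c] False by (simp add: supported_def)
  qed (simp add: lookup_var_mult)
  have "Poly_Mapping.lookup (?S ^ Suc d) b = (\<Sum>i\<in>I. Poly_Mapping.lookup (var i * ?S ^ d) b)"
    by (simp add: sum_distrib_right lookup_sum)
  also have "\<dots> = (if supported b (Suc d)
      then of_nat (fact d) * of_nat (\<Sum>i\<in>I. Poly_Mapping.lookup b i) / of_nat F else 0)"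
    by (simp add: summand sum_divide_distrib[symmetric] sum_distrib_left)
  also have "\<dots> = (if supported b (Suc d) then of_nat (fact (Suc d)) / of_nat F else 0)"
    by (simp add: supported_def algebra_simps)
  finally show ?case
    by (simp add: supported_def F_def)
qed

lemma falling_of_nat: "falling (of_nat a) r = of_nat ((a choose r) * fact r)"
  by (simp add: falling_def gbinomial_mult_fact' atLeast0LessThan binomial_gbinomial)

lemma falling_of_nat_mult_fact:
  assumes "r \<le> a"
  shows "falling (of_nat a) r * fact (a - r) = fact a"
proof -
  have "of_nat ((a choose r) * fact r * fact (a - r)) = (fact a :: complex)"
    using binomial_fact_lemma[OF assms] by (simp add: ac_simps)
  then show ?thesis
    by (simp add: falling_of_nat)
qed

lemma falling_of_nat_eq_0: "a < r \<Longrightarrow> falling (of_nat a) r = 0"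
  by (simp add: falling_of_nat binomial_eq_0)

lemma prod_falling_mult_prod_fact_diff:
  fixes \<alpha> k :: "'a \<Rightarrow>\<^sub>0 nat"
  assumes "Poly_Mapping.lookup \<alpha> \<le> Poly_Mapping.lookup k"
  shows "(\<Prod>i\<in>I. falling (of_nat (Poly_Mapping.lookup k i)) (Poly_Mapping.lookup \<alpha> i))
      * (\<Prod>i\<in>I. fact (Poly_Mapping.lookup (k - \<alpha>) i))
    = (\<Prod>i\<in>I. fact (Poly_Mapping.lookup k i))"
  using assms unfolding prod.distrib [symmetric]
  by (intro prod.cong refl) (simp add: lookup_minus le_fun_def falling_of_nat_mult_fact)

lemma prod_falling_eq_0:
  fixes \<alpha> k :: "'a \<Rightarrow>\<^sub>0 nat"
  assumes "finite I" "Poly_Mapping.keys \<alpha> \<subseteq> I" "\<not> Poly_Mapping.lookup \<alpha> \<le> Poly_Mapping.lookup k"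
  shows "(\<Prod>i\<in>I. falling (of_nat (Poly_Mapping.lookup k i)) (Poly_Mapping.lookup \<alpha> i)) = 0"
proof -
  obtain i where i: "Poly_Mapping.lookup k i < Poly_Mapping.lookup \<alpha> i"
    using assms(3) by (auto simp: le_fun_def not_le)
  then have "i \<in> I"
    using assms(2) by (auto simp: in_keys_iff)
  then show ?thesis
    using assms(1) i by (auto intro: prod_zero falling_of_nat_eq_0)
qed

lemma lookup_sum_var_power_diff:
  assumes "finite I" "Poly_Mapping.keys k \<subseteq> I" "Poly_Mapping.lookup \<alpha> \<le> Poly_Mapping.lookup k"
  defines "d \<equiv> (\<Sum>i\<in>I. Poly_Mapping.lookup k i) - (\<Sum>i\<in>I. Poly_Mapping.lookup \<alpha> i)"
  shows "Poly_Mapping.lookup ((\<Sum>i\<in>I. var i) ^ d) (k - \<alpha>)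
    = fact d / (\<Prod>i\<in>I. fact (Poly_Mapping.lookup k i))
      * (\<Prod>i\<in>I. falling (of_nat (Poly_Mapping.lookup k i)) (Poly_Mapping.lookup \<alpha> i))"
proof -
  let ?F = "\<Prod>i\<in>I. fact (Poly_Mapping.lookup k i) :: complex"
  let ?G = "\<Prod>i\<in>I. fact (Poly_Mapping.lookup (k - \<alpha>) i) :: complex"
  let ?\<Phi> = "\<Prod>i\<in>I. falling (of_nat (Poly_Mapping.lookup k i)) (Poly_Mapping.lookup \<alpha> i)"
  have "Poly_Mapping.keys (k - \<alpha>) \<subseteq> I"
    using assms(2) by (auto simp: in_keys_iff lookup_minus)
  moreover have "(\<Sum>i\<in>I. Poly_Mapping.lookup (k - \<alpha>) i) = d"
    using assms(3) by (simp add: d_def lookup_minus le_fun_def sum_subtractf_nat)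
  ultimately have coeff: "Poly_Mapping.lookup ((\<Sum>i\<in>I. var i) ^ d) (k - \<alpha>) = fact d / ?G"
    by (simp add: lookup_sum_var_power[OF assms(1)])
  have "?F \<noteq> 0" "?G \<noteq> 0"
    using assms(1) by (simp_all add: prod_zero_iff)
  moreover have "?\<Phi> = ?F / ?G"
    using prod_falling_mult_prod_fact_diff[OF assms(3)] \<open>?G \<noteq> 0\<close> by (simp add: eq_divide_eq)
  ultimately show ?thesis
    by (simp add: coeff)
qed

lemma mon_deg_eq_sum:
  assumes "finite I" "Poly_Mapping.keys \<alpha> \<subseteq> I"
  shows "mon_deg \<alpha> = (\<Sum>i\<in>I. Poly_Mapping.lookup \<alpha> i)"
  unfolding mon_deg_def using assms by (intro sum.mono_neutral_left) (auto simp: in_keys_iff)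

lemma total_deg_homogeneous:
  assumes "P \<noteq> 0" "\<And>\<alpha>. \<alpha> \<in> Poly_Mapping.keys P \<Longrightarrow> mon_deg \<alpha> = m"
  shows "total_deg P = m"
proof -
  have "mon_deg ` Poly_Mapping.keys P = (\<lambda>_. m) ` Poly_Mapping.keys P"
    using assms(2) by (rule image_cong[OF refl])
  also have "\<dots> = {m}"
    using assms(1) by (simp add: image_constant_conv)
  finally have "mon_deg ` Poly_Mapping.keys P = {m}" .
  then show ?thesis
    by (simp add: total_deg_def)
qed

theorem lemma2p1:
  fixes n m :: nat and P :: cpoly and k :: "nat \<Rightarrow>\<^sub>0 nat"
  assumes "n \<ge> 1"
    and hom: "\<forall>\<alpha>\<in>Poly_Mapping.keys P. Poly_Mapping.keys \<alpha> \<subseteq> {..<n} \<and> (\<Sum>i<n. Poly_Mapping.lookup \<alpha> i) = m"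
    and "P \<noteq> 0"
    and k_vars: "Poly_Mapping.keys k \<subseteq> {..<n}"
    and "total_deg P \<le> (\<Sum>i<n. Poly_Mapping.lookup k i)"
  shows "Poly_Mapping.lookup (P * (\<Sum>i<n. var i) ^ ((\<Sum>i<n. Poly_Mapping.lookup k i) - total_deg P)) k
       = of_nat (fact ((\<Sum>i<n. Poly_Mapping.lookup k i) - total_deg P)) / of_nat (\<Prod>i<n. fact (Poly_Mapping.lookup k i))
         * pstar_eval n P (\<lambda>i. of_nat (Poly_Mapping.lookup k i))"
proof -
  have deg: "total_deg P = m"
    using hom \<open>P \<noteq> 0\<close> by (intro total_deg_homogeneous) (auto simp: mon_deg_eq_sum)
  define d where "d = (\<Sum>i<n. Poly_Mapping.lookup k i) - m"
  define c :: complex where "c = fact d / (\<Prod>i<n. fact (Poly_Mapping.lookup k i))"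
  define t :: "(nat \<Rightarrow>\<^sub>0 nat) \<Rightarrow> complex" where "t \<alpha> = Poly_Mapping.lookup P \<alpha>
    * (\<Prod>i<n. falling (of_nat (Poly_Mapping.lookup k i)) (Poly_Mapping.lookup \<alpha> i))" for \<alpha>
  have "Poly_Mapping.lookup (P * (\<Sum>i<n. var i) ^ d) k
      = (\<Sum>\<alpha>\<in>{\<alpha> \<in> Poly_Mapping.keys P. Poly_Mapping.lookup \<alpha> \<le> Poly_Mapping.lookup k}.
          Poly_Mapping.lookup P \<alpha> * Poly_Mapping.lookup ((\<Sum>i<n. var i) ^ d) (k - \<alpha>))"
    by (rule lookup_mult_eq_sum_keys)
  also have "\<dots> = (\<Sum>\<alpha>\<in>{\<alpha> \<in> Poly_Mapping.keys P. Poly_Mapping.lookup \<alpha> \<le> Poly_Mapping.lookup k}. c * t \<alpha>)"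
  proof (intro sum.cong refl)
    fix \<alpha> assume \<alpha>: "\<alpha> \<in> {\<alpha> \<in> Poly_Mapping.keys P. Poly_Mapping.lookup \<alpha> \<le> Poly_Mapping.lookup k}"
    then have "(\<Sum>i<n. Poly_Mapping.lookup \<alpha> i) = m"
      using hom by auto
    then show "Poly_Mapping.lookup P \<alpha> * Poly_Mapping.lookup ((\<Sum>i<n. var i) ^ d) (k - \<alpha>) = c * t \<alpha>"
      using lookup_sum_var_power_diff[of "{..<n}" k \<alpha>] \<alpha> k_vars by (simp add: d_def c_def t_def)
  qed
  also have "\<dots> = (\<Sum>\<alpha>\<in>Poly_Mapping.keys P. c * t \<alpha>)"
    using hom by (intro sum.mono_neutral_left) (auto simp: t_def prod_falling_eq_0)
  also have "\<dots> = c * pstar_eval n P (\<lambda>i. of_nat (Poly_Mapping.lookup k i))"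
    by (simp add: pstar_eval_def t_def sum_distrib_left)
  finally show ?thesis
    by (simp add: deg d_def c_def)
qed

end
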